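(* The set of delay-insensitive gates $\{\textsf{MERGE},\textsf{FORK},\textsf{DUAL},\textsf{CROSS}\}$ can compute any Boolean function using a feed-forward planar circuit with dual-rail encoding.
   Context: Circuits transmit signals along wires with arbitrary (unbounded, unknown) delays; gates are delay-insensitive, i.e. they do not require simultaneity of inputs. The gates: \textsf{MERGE} has two input wires and one output wire and emits a signal on its output when a signal arrives on an input; at most one of its inputs is allowed to carry a signal. \textsf{FORK} has one input and two outputs and splits an incoming signal into two output copies. \textsf{DUAL} has two inputs and one output and produces an output signal once signals have arrived on both inputs. \textsf{CROSS} is a weak wire crossing of two wires, each signal passing straight through; simultaneous signals on both wires are prohibited. Dual-rail encoding represents each Boolean variable $\texttt{I}$ by two wires $\texttt{I}$ and $\neg\texttt{I}$: a signal is sent on wire $\texttt{I}$ if the value is true and on wire $\neg\texttt{I}$ if it is false (exactly one of the two carries a signal). A circuit is feed-forward if it contains no loops, and planar if its wires do not cross (other than through \textsf{CROSS} gates, which are themselves gates of the circuit). *)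

theory Defs
  imports Main
begin

text \<open>
  At every stage the circuit consists of a left-to-right ordered line of
  parallel wires; a gate is placed on adjacent wires of this line (so no wires
  ever cross except inside a CROSS gate, i.e. the circuit is planar), and
  gates are applied in sequence (so the circuit has no loops, i.e. it is
  feed-forward).  The state of a wire is a Boolean: whether a signal is
  (eventually) sent on it.  Since the circuit is feed-forward, every wire
  carries at most one signal and the eventual behaviour is independent of the
  (arbitrary, unknown) delays.  A gate application fails (None) when it is
  placed on non-existing wires or when its usage restriction is violated:
  MERGE must not receive signals on both inputs, and CROSS must not receive
  signals on both wires (with arbitrary delays, these could be simultaneous).
\<close>

datatype gate =
    Merge nat
  | Fork nat
  | Dual nat
  | Cross nat

fun apply_gate :: "gate \<Rightarrow> bool list \<Rightarrow> bool list option" where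
  "apply_gate (Merge i) ws =
     (if Suc i < length ws \<and> \<not> (ws ! i \<and> ws ! Suc i)
      then Some (take i ws @ [ws ! i \<or> ws ! Suc i] @ drop (Suc (Suc i)) ws)
      else None)"
| "apply_gate (Fork i) ws =
     (if i < length ws
      then Some (take i ws @ [ws ! i, ws ! i] @ drop (Suc i) ws)
      else None)"
| "apply_gate (Dual i) ws =
     (if Suc i < length ws
      then Some (take i ws @ [ws ! i \<and> ws ! Suc i] @ drop (Suc (Suc i)) ws)
      else None)"
| "apply_gate (Cross i) ws =
     (if Suc i < length ws \<and> \<not> (ws ! i \<and> ws ! Suc i)
      then Some (take i ws @ [ws ! Suc i, ws ! i] @ drop (Suc (Suc i)) ws)
      else None)"

fun run_circuit :: "gate list \<Rightarrow> bool list \<Rightarrow> bool list option" where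
  "run_circuit [] ws = Some ws"
| "run_circuit (g # gs) ws =
     (case apply_gate g ws of None \<Rightarrow> None | Some ws' \<Rightarrow> run_circuit gs ws')"

definition dual_rail :: "bool list \<Rightarrow> bool list" where
  "dual_rail xs = concat (map (\<lambda>b. [b, \<not> b]) xs)"

end

theory Submission
  imports Defs
begin

text \<open>
  No gate creates a signal from nothing, so the circuit first derives a constant rail from
  the last input: with two copies of its rail \<open>(x, \<not>x)\<close>, MERGE of \<open>x\<close> and \<open>\<not>x\<close> always
  fires and DUAL of them never does, which is the dual-rail constant True. With this rail
  appended, every function \<open>G\<close> from \<open>n\<close> to \<open>r\<close> bits is computed, by induction on \<open>n\<close>.
  For \<open>n = 0\<close> the constant output is built by copying the True rail and negating copies
  (a CROSS swaps the two wires of a rail). For \<open>n > 0\<close>, expand \<open>G\<close> on its first input \<open>y\<close>: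
  the remaining inputs compute the interleaving of \<open>G (True # -)\<close> and \<open>G (False # -)\<close>, a
  function with \<open>2r\<close> outputs, and a planar multiplexer gadget then moves the rail of \<open>y\<close>
  across the interleaved pairs, keeping one output of each pair according to \<open>y\<close>.
  Finally the rail of \<open>y\<close> is discarded: the DUAL of a rail never fires, so MERGE
  with it just passes on the neighbouring wire.
\<close>

fun shift_gate :: "nat \<Rightarrow> gate \<Rightarrow> gate" where
  "shift_gate k (Merge i) = Merge (k + i)"
| "shift_gate k (Fork i) = Fork (k + i)"
| "shift_gate k (Dual i) = Dual (k + i)"
| "shift_gate k (Cross i) = Cross (k + i)"

lemma shift_gate_0 [simp]: "shift_gate 0 = id"
proof
  show "shift_gate 0 g = id g" for g
    by (cases g) simp_all
qed

lemma apply_gate_shift: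
  assumes "apply_gate g ws = Some ws'"
  shows "apply_gate (shift_gate (length P) g) (P @ ws @ S) = Some (P @ ws' @ S)"
  using assms
  by (cases g) (auto simp: nth_append Suc_le_eq simp del: append_assoc split: if_splits)

lemma run_circuit_shift:
  "run_circuit c ws = Some ws' \<Longrightarrow>
   run_circuit (map (shift_gate (length P)) c) (P @ ws @ S) = Some (P @ ws' @ S)"
proof (induction c arbitrary: ws)
  case Nil
  then show ?case by simp
next
  case (Cons g c)
  then obtain w where "apply_gate g ws = Some w" and "run_circuit c w = Some ws'"
    by (auto split: option.splits)
  with Cons.IH show ?case
    by (simp add: apply_gate_shift)
qed

lemma run_circuit_append:
  "run_circuit c ws = Some ws' \<Longrightarrow> run_circuit d ws' = Some ws'' \<Longrightarrow>
   run_circuit (c @ d) ws = Some ws''"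
  by (induction c arbitrary: ws) (auto split: option.splits)

lemma dual_rail_simps [simp]:
  "dual_rail [] = []"
  "dual_rail (x # xs) = x # (\<not> x) # dual_rail xs"
  "dual_rail (xs @ ys) = dual_rail xs @ dual_rail ys"
  by (simp_all add: dual_rail_def)

lemma length_dual_rail [simp]: "length (dual_rail xs) = 2 * length xs"
  by (induction xs) simp_all

lemma run_circuit_shift_rails:
  assumes "run_circuit c (dual_rail xs) = Some (dual_rail ys)"
  shows "run_circuit (map (shift_gate (2 * length P)) c) (dual_rail (P @ xs @ S)) =
    Some (dual_rail (P @ ys @ S))"
  using run_circuit_shift[OF assms, of "dual_rail P" "dual_rail S"] by simp

lemma run_circuit_extend_rails:
  assumes "run_circuit c (dual_rail xs) = Some (dual_rail ys)"
  shows "run_circuit c (dual_rail (xs @ S)) = Some (dual_rail (ys @ S))"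
  using run_circuit_shift_rails[OF assms, of "[]" S] by simp

definition copy_rail :: "gate list" where
  "copy_rail = [Fork 0, Fork 2, Cross 1]"

lemma run_copy_rail: "run_circuit copy_rail (dual_rail [x]) = Some (dual_rail [x, x])"
  by (cases x) (simp_all add: copy_rail_def)

lemma run_negate_rail: "run_circuit [Cross 0] (dual_rail [x]) = Some (dual_rail [\<not> x])"
  by (cases x) simp_all

lemma run_true_rail: "run_circuit [Merge 0, Dual 1] (dual_rail [x, x]) = Some (dual_rail [True])"
  by (cases x) simp_all

lemma run_discard_first_rail:
  "run_circuit [Dual 0, Merge 0] (dual_rail [x, y]) = Some (dual_rail [y])"
  by (cases x; cases y) simp_all

lemma run_discard_second_rail:
  "run_circuit [Dual 2, Merge 1] (dual_rail [x, y]) = Some (dual_rail [x])"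
  by (cases x; cases y) simp_all

definition append_true_rail :: "gate list" where
  "append_true_rail = copy_rail @ map (shift_gate 2) (copy_rail @ [Merge 0, Dual 1])"

lemma run_append_true_rail:
  "run_circuit append_true_rail (dual_rail [x]) = Some (dual_rail [x, True])"
proof -
  have "run_circuit (map (shift_gate 2) (copy_rail @ [Merge 0, Dual 1])) (dual_rail [x, x])
      = Some (dual_rail [x, True])"
    using run_circuit_shift_rails[OF run_circuit_append[OF run_copy_rail run_true_rail],
        where P = "[x]" and S = "[]"]
    by simp
  with run_copy_rail show ?thesis
    unfolding append_true_rail_def by (rule run_circuit_append)
qed

fun constant_rails :: "bool list \<Rightarrow> gate list" where
  "constant_rails [] = []"
| "constant_rails (b # bs) =
     copy_rail @ (if b then [] else [Cross 0]) @ map (shift_gate 2) (constant_rails bs)"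

lemma run_constant_rails:
  "run_circuit (constant_rails bs) (dual_rail [True]) = Some (dual_rail (bs @ [True]))"
proof (induction bs)
  case Nil
  show ?case by simp
next
  case (Cons b bs)
  have set_first: "run_circuit (if b then [] else [Cross 0]) (dual_rail [True, True])
      = Some (dual_rail [b, True])"
    using run_circuit_extend_rails[OF run_negate_rail, where S = "[True]"] by simp
  have rest: "run_circuit (map (shift_gate 2) (constant_rails bs)) (dual_rail [b, True])
      = Some (dual_rail (b # bs @ [True]))"
    using run_circuit_shift_rails[OF Cons.IH, where P = "[b]" and S = "[]"] by simp
  show ?case
    using run_circuit_append[OF run_copy_rail run_circuit_append[OF set_first rest]] by simp
qed

definition mux_gadget :: "gate list" where
  "mux_gadget = [Cross 0, Fork 1, Dual 2, Cross 2, Dual 1, Cross 0, Cross 1,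
     Fork 2, Dual 3, Cross 3, Dual 2,
     Cross 0, Fork 0, Fork 3, Cross 4, Fork 4, Cross 3, Cross 2, Cross 1, Fork 3, Cross 2,
     Cross 4, Cross 3, Merge 0, Merge 1, Merge 2, Merge 3]"

lemma run_mux_gadget:
  "run_circuit mux_gadget (dual_rail [y, a, b]) = Some (dual_rail [if y then a else b, y])"
  by (cases y; cases a; cases b) (simp_all add: mux_gadget_def)

fun mux_rails :: "nat \<Rightarrow> gate list" where
  "mux_rails 0 = []"
| "mux_rails (Suc r) = mux_gadget @ map (shift_gate 2) (mux_rails r)"

lemma run_mux_rails:
  assumes "length A = r" and "length B = r"
  shows "run_circuit (mux_rails r) (dual_rail (y # splice A B))
    = Some (dual_rail ((if y then A else B) @ [y]))"
  using assms
proof (induction r arbitrary: A B)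
  case 0
  then show ?case by simp
next
  case (Suc r)
  then obtain a A' b B' where AB: "A = a # A'" "B = b # B'" "length A' = r" "length B' = r"
    by (auto simp: length_Suc_conv)
  let ?s = "if y then a else b"
  have "run_circuit mux_gadget (dual_rail (y # splice A B))
      = Some (dual_rail (?s # y # splice A' B'))"
    using run_circuit_extend_rails[OF run_mux_gadget, where S = "splice A' B'"] AB by simp
  moreover have "run_circuit (map (shift_gate 2) (mux_rails r)) (dual_rail (?s # y # splice A' B'))
      = Some (dual_rail ((if y then A else B) @ [y]))"
    using run_circuit_shift_rails[OF Suc.IH[OF AB(3,4)], where P = "[?s]" and S = "[]"] AB
    by simp
  ultimately show ?case
    by (simp add: run_circuit_append)
qed

lemma circuit_with_true_rail:
  assumes "\<And>ys. length ys = n \<Longrightarrow> length (G ys) = r"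
  shows "\<exists>c. \<forall>ys. length ys = n \<longrightarrow>
    run_circuit c (dual_rail (ys @ [True])) = Some (dual_rail (G ys @ [True]))"
  using assms
proof (induction n arbitrary: r G)
  case 0
  then show ?case
    using run_constant_rails[of "G []"] by auto
next
  case (Suc n)
  define G' where "G' ys = splice (G (True # ys)) (G (False # ys))" for ys
  have "length (G' ys) = 2 * r" if "length ys = n" for ys
    using Suc.prems that by (simp add: G'_def)
  then obtain c where c: "\<And>ys. length ys = n \<Longrightarrow>
      run_circuit c (dual_rail (ys @ [True])) = Some (dual_rail (G' ys @ [True]))"
    using Suc.IH by blast
  have "run_circuit (map (shift_gate 2) c @ mux_rails r @ map (shift_gate (2 * r)) [Dual 0, Merge 0])
      (dual_rail (ys @ [True])) = Some (dual_rail (G ys @ [True]))"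
    if "length ys = Suc n" for ys
  proof -
    from that obtain y ys' where ys: "ys = y # ys'" "length ys' = n"
      by (cases ys) auto
    have lengths: "length (G (True # ys')) = r" "length (G (False # ys')) = r"
      using Suc.prems ys by auto
    have expand: "run_circuit (map (shift_gate 2) c) (dual_rail (ys @ [True]))
        = Some (dual_rail (y # G' ys' @ [True]))"
      using run_circuit_shift_rails[OF c[OF ys(2)], where P = "[y]" and S = "[]"] ys by simp
    have select: "run_circuit (mux_rails r) (dual_rail (y # G' ys' @ [True]))
        = Some (dual_rail (G ys @ [y, True]))"
      using run_circuit_extend_rails[OF run_mux_rails[OF lengths, of y], where S = "[True]"] ys
      by (cases y) (simp_all add: G'_def)
    have discard: "run_circuit (map (shift_gate (2 * r)) [Dual 0, Merge 0])
        (dual_rail (G ys @ [y, True])) = Some (dual_rail (G ys @ [True]))"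
      using run_circuit_shift_rails[OF run_discard_first_rail[of y True],
          where P = "G ys" and S = "[]"] Suc.prems that
      by (simp del: run_circuit.simps)
    show ?thesis
      using run_circuit_append[OF expand run_circuit_append[OF select discard]] .
  qed
  then show ?case by blast
qed

theorem mainTheorem9:
  fixes f :: "bool list \<Rightarrow> bool" and n :: nat
  assumes "n \<ge> 1"
  shows "\<exists>c :: gate list. \<forall>xs. length xs = n \<longrightarrow>
           run_circuit c (dual_rail xs) = Some [f xs, \<not> f xs]"
proof -
  obtain c where c: "\<And>xs. length xs = n \<Longrightarrow>
      run_circuit c (dual_rail (xs @ [True])) = Some (dual_rail [f xs, True])"
    using circuit_with_true_rail[of n "\<lambda>xs. [f xs]" 1] by auto
  have "run_circuit (map (shift_gate (2 * (n - 1))) append_true_rail @ c @ [Dual 2, Merge 1])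
      (dual_rail xs) = Some [f xs, \<not> f xs]" if "length xs = n" for xs
  proof -
    from that assms obtain zs z where "xs = zs @ [z]" and "length zs = n - 1"
      by (metis One_nat_def Suc_le_D length_Suc_conv_rev diff_Suc_1)
    then have "run_circuit (map (shift_gate (2 * (n - 1))) append_true_rail) (dual_rail xs)
        = Some (dual_rail (xs @ [True]))"
      using run_circuit_shift_rails[OF run_append_true_rail, where P = zs and S = "[]"] by simp
    moreover have "run_circuit [Dual 2, Merge 1] (dual_rail [f xs, True]) = Some [f xs, \<not> f xs]"
      using run_discard_second_rail by simp
    ultimately show ?thesis
      using c[OF that] by (blast intro: run_circuit_append)
  qed
  then show ?thesis by blast
qed

end
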